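(* Let $Q$ be a QNP and let $Q_M$ be the QNP obtained from $P=T(Q)$ as described in the context. If a policy $\pi$ solves the FOND problem $P=T(Q)$ (i.e. is a strong cyclic solution of it), then $\pi$ solves the QNP $Q_M$.
   Context: QNPs: $Q=\langle F,V,I,O,G\rangle$ with propositional variables $F$, numerical variables $V$ (non-negative reals), literals $p,\neg p$, $X=0$, $X>0$; actions with precondition $Pre(a)$, propositional effects $\mathit{Eff}(a)$, numerical effects $N(a)\subseteq\{Inc(X),Dec(X)\}$ (at most one per variable; $Dec(X)\in N(a)$ implies $X>0\in Pre(a)$). A state assigns truth values to the propositional variables and reals $\ge0$ to $V$; initial states satisfy $I$ (closed world); goal states satisfy $G$; for applicable $a$, successors apply propositional effects, strictly increase $X$ for $Inc(X)$, strictly decrease $X$ for $Dec(X)$, leave the rest unchanged. For $\epsilon>0$, an $\epsilon$-trajectory is such a sequence $s_0,a_0,s_1,\dots$ from an initial state in which every change of a variable has magnitude $\ge\epsilon$ unless it goes from a value $<\epsilon$ to $0$. Policies map states to actions depending only on the truth values of the propositional atoms and the atoms $X=0$; a maximal $\pi$-trajectory is infinite without goal, ends at its first goal state, or ends where $\pi$ is undefined/inapplicable; $\pi$ solves a QNP iff for every $\epsilon>0$ every maximal $\epsilon$-$\pi$-trajectory reaches a goal state. The FOND problem $T(Q)$: $n=|F|+|V|$, $Max=1+2^n$. Propositional variables: $F$, $p_{X=0}$ ($X\in V$; $X=0$/$X>0$ denote $p_{X=0}$/$\neg p_{X=0}$), $in(X)$, $depth(d)$ ($0\le d\le|V|$),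 $index(X,d)$ ($1\le d\le|V|$), counters $c(d)$ ($0\le d\le|V|$), $c_T$ over $\{0,\dots,Max\}$ encoded in binary. Initial state: $I$ plus $depth(0)$, counters $0$, other new atoms false; goal $G$. Actions: $Push(X,d)$ ($0\le d<|V|$): pre $\neg in(X),depth(d),c(d)<Max$; eff $in(X),index(X,d+1),depth(d+1),\neg depth(d),c(d):=c(d)+1,c(d+1):=0$. $Pop(X,d)$ ($1\le d\le|V|$): pre $in(X),index(X,d),depth(d)$; eff $\neg in(X),\neg index(X,d),\neg depth(d),depth(d-1)$. $Move$: pre $depth(0),c_T<Max$; eff $c_T:=c_T+1$. For $a\in O$ with no $Dec$ effect: action $a$ with pre $Pre(a)$ plus $\neg in(Y)$ for each $Inc(Y)\in N(a)$, eff $\mathit{Eff}(a)$ plus $Y>0$ for each $Inc(Y)\in N(a)$. For $a$ with a $Dec$ effect, $X$ with $Dec(X)\in N(a)$, $1\le d\le|V|$: action $a(X,d)$ with pre $Pre(a)$, $\neg in(Y)$ for $Inc(Y)\in N(a)$, $index(X,d)$; eff $\mathit{Eff}(a)$, $Y>0$ for $Inc(Y)\in N(a)$, nondeterministic $Z>0\mid Z=0$ for each $Dec(Z)\in N(a)$, $c(d'):=0$ for $d\le d'\le|V|$. A strong cyclic solution of a FOND problem is a policy such that from every state reachable from the initial state under $\pi$ some goal state is reachable under $\pi$. $Q_M$ is the QNP whose propositional variables are those of $T(Q)$ other than the atoms $p_{X=0}$, whose numerical variables are $V$, whose initial situation, goal and actions are those of $T(Q)$ except that literals $p_{X=0}$/$\neg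 p_{X=0}$ in initial situation, goal and preconditions are read as the numerical literals $X=0$/$X>0$, each effect $Y>0$ originating from $Inc(Y)$ is replaced by $Inc(Y)$, and each nondeterministic effect $Z>0\mid Z=0$ is replaced by $Dec(Z)$. Thus $T(Q)$ is the direct translation of $Q_M$ and a policy for $T(Q)$ is a policy for $Q_M$. *)

theory Defs
  imports Main "HOL.Real"
begin

datatype ('p,'v) lit = PosL 'p | NegL 'p | ZeroL 'v | PosNL 'v
  (* p, \<not>p, X = 0, X > 0 *)

datatype neff = Inc | Dec

record ('p,'v,'a) qnp =
  qF   :: "'p set"
  qV   :: "'v set"
  qI   :: "('p,'v) lit set"           (* initial situation I (closed world) *)
  qG   :: "('p,'v) lit set"
  qO   :: "'a set"
  qPre :: "'a \<Rightarrow> ('p,'v) lit set"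
  qEff :: "'a \<Rightarrow> ('p \<times> bool) set"     (* Eff(a): (p,True) = p, (p,False) = \<not>p *)
  qN   :: "'a \<Rightarrow> 'v \<Rightarrow> neff option"

fun lit_ok :: "'p set \<Rightarrow> 'v set \<Rightarrow> ('p,'v) lit \<Rightarrow> bool" where
  "lit_ok F V (PosL p) = (p \<in> F)"
| "lit_ok F V (NegL p) = (p \<in> F)"
| "lit_ok F V (ZeroL X) = (X \<in> V)"
| "lit_ok F V (PosNL X) = (X \<in> V)"

fun compl_lit :: "('p,'v) lit \<Rightarrow> ('p,'v) lit" where
  "compl_lit (PosL p) = NegL p"
| "compl_lit (NegL p) = PosL p"
| "compl_lit (ZeroL X) = PosNL X"
| "compl_lit (PosNL X) = ZeroL X"

definition wf_qnp :: "('p,'v,'a) qnp \<Rightarrow> bool" where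
  "wf_qnp Q \<longleftrightarrow>
     finite (qF Q) \<and> finite (qV Q) \<and> finite (qO Q)
   \<and> (\<forall>l \<in> qI Q. lit_ok (qF Q) (qV Q) l \<and> compl_lit l \<notin> qI Q)
   \<and> (\<forall>l \<in> qG Q. lit_ok (qF Q) (qV Q) l)
   \<and> (\<forall>a \<in> qO Q.
        (\<forall>l \<in> qPre Q a. lit_ok (qF Q) (qV Q) l)
      \<and> (\<forall>(p,b) \<in> qEff Q a. p \<in> qF Q \<and> (p, \<not> b) \<notin> qEff Q a)
      \<and> (\<forall>X. qN Q a X \<noteq> None \<longrightarrow> X \<in> qV Q)
      \<and> (\<forall>X. qN Q a X = Some Dec \<longrightarrow> PosNL X \<in> qPre Q a))"

fun holds_lit :: "('p \<Rightarrow> bool) \<Rightarrow> ('v \<Rightarrow> bool) \<Rightarrow> ('p,'v) lit \<Rightarrow> bool" where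
  "holds_lit f z (PosL p) = f p"
| "holds_lit f z (NegL p) = (\<not> f p)"
| "holds_lit f z (ZeroL X) = z X"
| "holds_lit f z (PosNL X) = (\<not> z X)"

definition apply_eff :: "('p \<times> bool) set \<Rightarrow> ('p \<Rightarrow> bool) \<Rightarrow> ('p \<Rightarrow> bool)" where
  "apply_eff E f = (\<lambda>p. if (p, True) \<in> E then True else if (p, False) \<in> E then False else f p)"

record ('s,'a) fond =
  fA    :: "'a set"
  fI    :: 's
  fGoal :: "'s \<Rightarrow> bool"
  fPre  :: "'a \<Rightarrow> 's \<Rightarrow> bool"
  fSucc :: "'a \<Rightarrow> 's \<Rightarrow> 's set"

text \<open>One step of a pi-trajectory (trajectories end at goal states).\<close>
definition fond_step :: "('s,'a) fond \<Rightarrow> ('s \<Rightarrow> 'a option) \<Rightarrow> 's \<Rightarrow> 's \<Rightarrow> bool" where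
  "fond_step P \<pi> s s' \<longleftrightarrow> \<not> fGoal P s \<and>
     (\<exists>a. \<pi> s = Some a \<and> a \<in> fA P \<and> fPre P a s \<and> s' \<in> fSucc P a s)"

definition strong_cyclic :: "('s,'a) fond \<Rightarrow> ('s \<Rightarrow> 'a option) \<Rightarrow> bool" where
  "strong_cyclic P \<pi> \<longleftrightarrow>
     (\<forall>s. (fond_step P \<pi>)\<^sup>*\<^sup>* (fI P) s \<longrightarrow> (\<exists>g. (fond_step P \<pi>)\<^sup>*\<^sup>* s g \<and> fGoal P g))"

text \<open>The propositional part of a state is an element of 'd; the numerical part is
  'v \<Rightarrow> real.\<close>

record ('d,'v,'a) gqnp =
  gA    :: "'a set"
  gInit :: "'d \<Rightarrow> ('v \<Rightarrow> bool) \<Rightarrow> bool"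
  gGoal :: "'d \<Rightarrow> ('v \<Rightarrow> bool) \<Rightarrow> bool"
  gPre  :: "'a \<Rightarrow> 'd \<Rightarrow> ('v \<Rightarrow> bool) \<Rightarrow> bool"
  gDeff :: "'a \<Rightarrow> 'd \<Rightarrow> 'd"
  gNum  :: "'a \<Rightarrow> 'v \<Rightarrow> neff option"

definition zeros :: "('v \<Rightarrow> real) \<Rightarrow> ('v \<Rightarrow> bool)" where
  "zeros v = (\<lambda>X. v X = 0)"

definition g_init :: "('d,'v,'a) gqnp \<Rightarrow> 'd \<times> ('v \<Rightarrow> real) \<Rightarrow> bool" where
  "g_init M s \<longleftrightarrow> gInit M (fst s) (zeros (snd s)) \<and> (\<forall>X. 0 \<le> snd s X)"

definition g_goal :: "('d,'v,'a) gqnp \<Rightarrow> 'd \<times> ('v \<Rightarrow> real) \<Rightarrow> bool" where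
  "g_goal M s \<longleftrightarrow> gGoal M (fst s) (zeros (snd s))"

definition g_succ :: "('d,'v,'a) gqnp \<Rightarrow> 'a \<Rightarrow> 'd \<times> ('v \<Rightarrow> real) \<Rightarrow> 'd \<times> ('v \<Rightarrow> real) \<Rightarrow> bool" where
  "g_succ M a s s' \<longleftrightarrow> fst s' = gDeff M a (fst s) \<and>
     (\<forall>X. case gNum M a X of
            Some Inc \<Rightarrow> snd s' X > snd s X
          | Some Dec \<Rightarrow> snd s' X < snd s X \<and> 0 \<le> snd s' X
          | None \<Rightarrow> snd s' X = snd s X)"

definition eps_ok :: "real \<Rightarrow> ('v \<Rightarrow> real) \<Rightarrow> ('v \<Rightarrow> real) \<Rightarrow> bool" where
  "eps_ok \<epsilon> v v' \<longleftrightarrow> (\<forall>X. v' X \<noteq> v X \<longrightarrow> (\<bar>v' X - v X\<bar> \<ge> \<epsilon> \<or> (v X < \<epsilon> \<and> v' X = 0)))"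

definition pol_applicable :: "('d,'v,'a) gqnp \<Rightarrow> ('d \<times> ('v \<Rightarrow> bool) \<Rightarrow> 'a option)
    \<Rightarrow> 'd \<times> ('v \<Rightarrow> real) \<Rightarrow> bool" where
  "pol_applicable M \<pi> s \<longleftrightarrow> (\<exists>a. \<pi> (fst s, zeros (snd s)) = Some a \<and> a \<in> gA M \<and>
      gPre M a (fst s) (zeros (snd s)))"

definition eps_step :: "('d,'v,'a) gqnp \<Rightarrow> real \<Rightarrow> ('d \<times> ('v \<Rightarrow> bool) \<Rightarrow> 'a option)
    \<Rightarrow> 'd \<times> ('v \<Rightarrow> real) \<Rightarrow> 'd \<times> ('v \<Rightarrow> real) \<Rightarrow> bool" where
  "eps_step M \<epsilon> \<pi> s s' \<longleftrightarrow> (\<exists>a. \<pi> (fst s, zeros (snd s)) = Some a \<and> a \<in> gA M \<and>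
      gPre M a (fst s) (zeros (snd s)) \<and> g_succ M a s s' \<and> eps_ok \<epsilon> (snd s) (snd s'))"

definition max_fin_traj :: "('d,'v,'a) gqnp \<Rightarrow> real \<Rightarrow> ('d \<times> ('v \<Rightarrow> bool) \<Rightarrow> 'a option)
    \<Rightarrow> (nat \<Rightarrow> 'd \<times> ('v \<Rightarrow> real)) \<Rightarrow> nat \<Rightarrow> bool" where
  "max_fin_traj M \<epsilon> \<pi> f n \<longleftrightarrow> g_init M (f 0) \<and>
     (\<forall>i<n. \<not> g_goal M (f i) \<and> eps_step M \<epsilon> \<pi> (f i) (f (Suc i))) \<and>
     (g_goal M (f n) \<or> \<not> pol_applicable M \<pi> (f n))"

definition max_inf_traj :: "('d,'v,'a) gqnp \<Rightarrow> real \<Rightarrow> ('d \<times> ('v \<Rightarrow> bool) \<Rightarrow> 'a option)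
    \<Rightarrow> (nat \<Rightarrow> 'd \<times> ('v \<Rightarrow> real)) \<Rightarrow> bool" where
  "max_inf_traj M \<epsilon> \<pi> f \<longleftrightarrow> g_init M (f 0) \<and>
     (\<forall>i. \<not> g_goal M (f i) \<and> eps_step M \<epsilon> \<pi> (f i) (f (Suc i)))"

definition qnp_solves :: "('d,'v,'a) gqnp \<Rightarrow> ('d \<times> ('v \<Rightarrow> bool) \<Rightarrow> 'a option) \<Rightarrow> bool" where
  "qnp_solves M \<pi> \<longleftrightarrow> (\<forall>\<epsilon>>0.
      (\<forall>f n. max_fin_traj M \<epsilon> \<pi> f n \<longrightarrow> (\<exists>i\<le>n. g_goal M (f i))) \<and>
      (\<forall>f. max_inf_traj M \<epsilon> \<pi> f \<longrightarrow> (\<exists>i. g_goal M (f i))))"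

text \<open>Propositional part of T(Q) without the atoms p_{X=0}; counters c(d), c_T are
  represented by their values in {0..Max} (isomorphic to their binary encoding).\<close>
record ('p,'v) tst =
  tF     :: "'p \<Rightarrow> bool"
  tIn    :: "'v \<Rightarrow> bool"
  tDepth :: "nat \<Rightarrow> bool"
  tIndex :: "'v \<Rightarrow> nat \<Rightarrow> bool"
  tC     :: "nat \<Rightarrow> nat"
  tCT    :: nat

datatype ('v,'a) tact = Push 'v nat | Pop 'v nat | Move | Act 'a | ActD 'a 'v nat

definition nV :: "('p,'v,'a) qnp \<Rightarrow> nat" where
  "nV Q = card (qV Q)"

definition MaxC :: "('p,'v,'a) qnp \<Rightarrow> nat" where
  "MaxC Q = 1 + 2 ^ (card (qF Q) + card (qV Q))"

definition has_dec :: "('p,'v,'a) qnp \<Rightarrow> 'a \<Rightarrow> bool" where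
  "has_dec Q a \<longleftrightarrow> (\<exists>X. qN Q a X = Some Dec)"

definition t_actions :: "('p,'v,'a) qnp \<Rightarrow> ('v,'a) tact set" where
  "t_actions Q =
      {Push X d | X d. X \<in> qV Q \<and> d < nV Q}
    \<union> {Pop X d | X d. X \<in> qV Q \<and> 1 \<le> d \<and> d \<le> nV Q}
    \<union> {Move}
    \<union> {Act a | a. a \<in> qO Q \<and> \<not> has_dec Q a}
    \<union> {ActD a X d | a X d. a \<in> qO Q \<and> qN Q a X = Some Dec \<and> 1 \<le> d \<and> d \<le> nV Q}"

fun t_pre :: "('p,'v,'a) qnp \<Rightarrow> ('v,'a) tact \<Rightarrow> ('p,'v) tst \<Rightarrow> ('v \<Rightarrow> bool) \<Rightarrow> bool" where
  "t_pre Q (Push X d) t z = (\<not> tIn t X \<and> tDepth t d \<and> tC t d < MaxC Q)"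
| "t_pre Q (Pop X d) t z = (tIn t X \<and> tIndex t X d \<and> tDepth t d)"
| "t_pre Q Move t z = (tDepth t 0 \<and> tCT t < MaxC Q)"
| "t_pre Q (Act a) t z = ((\<forall>l \<in> qPre Q a. holds_lit (tF t) z l) \<and>
      (\<forall>Y. qN Q a Y = Some Inc \<longrightarrow> \<not> tIn t Y))"
| "t_pre Q (ActD a X d) t z = ((\<forall>l \<in> qPre Q a. holds_lit (tF t) z l) \<and>
      (\<forall>Y. qN Q a Y = Some Inc \<longrightarrow> \<not> tIn t Y) \<and> tIndex t X d)"

fun t_deff :: "('p,'v,'a) qnp \<Rightarrow> ('v,'a) tact \<Rightarrow> ('p,'v) tst \<Rightarrow> ('p,'v) tst" where
  "t_deff Q (Push X d) t = t\<lparr>tIn := (tIn t)(X := True),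
      tIndex := (tIndex t)(X := (tIndex t X)(d + 1 := True)),
      tDepth := (tDepth t)(d := False, d + 1 := True),
      tC := (tC t)(d := tC t d + 1, d + 1 := 0)\<rparr>"
| "t_deff Q (Pop X d) t = t\<lparr>tIn := (tIn t)(X := False),
      tIndex := (tIndex t)(X := (tIndex t X)(d := False)),
      tDepth := (tDepth t)(d := False, d - 1 := True)\<rparr>"
| "t_deff Q Move t = t\<lparr>tCT := tCT t + 1\<rparr>"
| "t_deff Q (Act a) t = t\<lparr>tF := apply_eff (qEff Q a) (tF t)\<rparr>"
| "t_deff Q (ActD a X d) t = t\<lparr>tF := apply_eff (qEff Q a) (tF t),
      tC := (\<lambda>d'. if d \<le> d' \<and> d' \<le> nV Q then 0 else tC t d')\<rparr>"

text \<open>Numerical effects (as in Q_M; in T(Q) Inc(Y) becomes Y>0 and Dec(Z) becomes Z>0 | Z=0).\<close>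
fun t_num :: "('p,'v,'a) qnp \<Rightarrow> ('v,'a) tact \<Rightarrow> 'v \<Rightarrow> neff option" where
  "t_num Q (Act a) = qN Q a"
| "t_num Q (ActD a X d) = qN Q a"
| "t_num Q _ = (\<lambda>_. None)"

definition t_init :: "('p,'v,'a) qnp \<Rightarrow> ('p,'v) tst" where
  "t_init Q = \<lparr>tF = (\<lambda>p. PosL p \<in> qI Q), tIn = (\<lambda>_. False), tDepth = (\<lambda>d. d = 0),
      tIndex = (\<lambda>_ _. False), tC = (\<lambda>_. 0), tCT = 0\<rparr>"

definition init_z :: "('p,'v,'a) qnp \<Rightarrow> 'v \<Rightarrow> bool" where
  "init_z Q = (\<lambda>X. ZeroL X \<in> qI Q)"

definition t_goal :: "('p,'v,'a) qnp \<Rightarrow> ('p,'v) tst \<Rightarrow> ('v \<Rightarrow> bool) \<Rightarrow> bool" where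
  "t_goal Q t z \<longleftrightarrow> (\<forall>l \<in> qG Q. holds_lit (tF t) z l)"

text \<open>The FOND problem T(Q); its states are pairs (propositional part, values of p_{X=0}).\<close>
definition TQ :: "('p,'v,'a) qnp \<Rightarrow> (('p,'v) tst \<times> ('v \<Rightarrow> bool), ('v,'a) tact) fond" where
  "TQ Q = \<lparr> fA = t_actions Q,
            fI = (t_init Q, init_z Q),
            fGoal = (\<lambda>(t, z). t_goal Q t z),
            fPre = (\<lambda>a (t, z). t_pre Q a t z),
            fSucc = (\<lambda>a (t, z). {(t_deff Q a t, z') | z'.
                       \<forall>Y. (t_num Q a Y = Some Inc \<longrightarrow> \<not> z' Y)
                         \<and> (t_num Q a Y = None \<longrightarrow> z' Y = z Y)}) \<rparr>"

definition QM :: "('p,'v,'a) qnp \<Rightarrow> (('p,'v) tst, 'v, ('v,'a) tact) gqnp" where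
  "QM Q = \<lparr> gA = t_actions Q,
            gInit = (\<lambda>t z. t = t_init Q \<and> z = init_z Q),
            gGoal = t_goal Q,
            gPre = t_pre Q,
            gDeff = t_deff Q,
            gNum = t_num Q \<rparr>"

end

theory Submission
  imports Defs
begin

(* A state of Q_M is abstracted to a state of T(Q) by keeping its propositional part and the
   truth values of the atoms X = 0; every epsilon-step of Q_M from a non-goal state then
   becomes a pi-step of T(Q). A finite maximal trajectory ending in a non-goal state would give
   a reachable dead end, which a strong cyclic policy does not have.

   For an infinite goal-free trajectory, the atoms depth, in and index encode a stack of
   distinct variables. Let d be the least depth visited infinitely often. Eventually the bottom
   d entries of the stack are frozen; these variables can no longer be incremented, and since
   each decrement is by at least epsilon or down to 0, eventually they are not decremented
   either. So the counter c(d) is eventually never reset, hence pushes at depth d stop, the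
   depth stays d, and once c_T is exhausted only actions without Dec effects remain. Those are
   deterministic in T(Q), so everything reachable from a late state of the trajectory lies on
   its goal-free tail, contradicting strong cyclicity. *)

section \<open>Eventual behaviour of sequences\<close>

lemma eventually_sequentially_inductive:
  assumes "P M" and "\<And>i. M \<le> i \<Longrightarrow> P i \<Longrightarrow> P (Suc i)"
  shows "\<forall>\<^sub>F i in sequentially. P i"
proof (rule eventually_sequentiallyI)
  show "P i" if "M \<le> i" for i
    using that by (induction i rule: dec_induct) (use assms in auto)
qed

lemma eventually_of_frequently_invariant:
  assumes "\<forall>\<^sub>F i in sequentially. P i \<longrightarrow> P (Suc i)" and "\<exists>\<^sub>F i in sequentially. P i"
  shows "\<forall>\<^sub>F i in sequentially. P i"
proof -
  obtain M where inv: "\<And>i. M \<le> i \<Longrightarrow> P i \<Longrightarrow> P (Suc i)"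
    using assms(1) by (auto simp: eventually_sequentially)
  obtain i where "M \<le> i" "P i"
    using assms(2) by (auto simp: frequently_sequentially)
  then show ?thesis
    by (intro eventually_sequentially_inductive[of P i]) (auto intro: inv)
qed

lemma eventually_not_of_nat_potential:
  fixes h :: "nat \<Rightarrow> nat"
  assumes "\<forall>\<^sub>F i in sequentially. h (Suc i) \<le> h i \<and> (P i \<longrightarrow> h (Suc i) < h i)"
  shows "\<forall>\<^sub>F i in sequentially. \<not> P i"
proof -
  obtain M where dec: "\<And>i. M \<le> i \<Longrightarrow> h (Suc i) \<le> h i"
    and strict: "\<And>i. M \<le> i \<Longrightarrow> P i \<Longrightarrow> h (Suc i) < h i"
    using assms by (auto simp: eventually_sequentially)
  have antitone: "h j \<le> h i" if "M \<le> i" "i \<le> j" for i j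
    using that(2) by (induction j rule: dec_induct) (use that(1) dec order_trans in auto)
  define A where "A = {i. M \<le> i \<and> P i}"
  have "h j < h i" if "i \<in> A" "j \<in> A" "i < j" for i j
    using that antitone[of "Suc i" j] strict[of i] by (auto simp: A_def)
  then have "inj_on h A"
    by (metis inj_onI linorder_neqE_nat order_less_irrefl)
  moreover have "h ` A \<subseteq> {..h M}"
    using antitone by (auto simp: A_def)
  ultimately have "finite A"
    by (rule inj_on_finite) simp
  moreover have "{i. P i} \<subseteq> {..<M} \<union> A"
    by (auto simp: A_def)
  ultimately have "finite {i. P i}"
    by (meson finite_Un finite_lessThan finite_subset)
  then show ?thesis
    by (simp add: cofinite_eq_sequentially[symmetric] eventually_cofinite)
qed

lemma nat_ceiling_divide_decrease:
  fixes a a' \<epsilon> :: real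
  assumes "0 < \<epsilon>" "0 \<le> a'" "a' < a" "\<epsilon> \<le> a - a' \<or> a' = 0"
  shows "nat \<lceil>a' / \<epsilon>\<rceil> < nat \<lceil>a / \<epsilon>\<rceil>"
proof -
  have "0 < \<lceil>a / \<epsilon>\<rceil>"
    using assms by simp
  moreover have "\<lceil>a' / \<epsilon>\<rceil> < \<lceil>a / \<epsilon>\<rceil>" if "\<epsilon> \<le> a - a'"
  proof -
    have "a' / \<epsilon> \<le> a / \<epsilon> - 1"
      using assms(1) that by (simp add: field_simps)
    then have "\<lceil>a' / \<epsilon>\<rceil> \<le> \<lceil>a / \<epsilon> - 1\<rceil>"
      by (rule ceiling_mono)
    then show ?thesis by simp
  qed
  ultimately show ?thesis
    using assms(4) by fastforce
qed

lemma eventually_not_of_eps_decrease: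
  fixes g :: "nat \<Rightarrow> real"
  assumes "0 < \<epsilon>" and "\<And>i. 0 \<le> g i"
    and "\<forall>\<^sub>F i in sequentially. g (Suc i) \<le> g i \<and>
           (P i \<longrightarrow> g (Suc i) < g i \<and> (\<epsilon> \<le> g i - g (Suc i) \<or> g (Suc i) = 0))"
  shows "\<forall>\<^sub>F i in sequentially. \<not> P i"
proof (rule eventually_not_of_nat_potential[where h = "\<lambda>i. nat \<lceil>g i / \<epsilon>\<rceil>"])
  show "\<forall>\<^sub>F i in sequentially. nat \<lceil>g (Suc i) / \<epsilon>\<rceil> \<le> nat \<lceil>g i / \<epsilon>\<rceil> \<and>
      (P i \<longrightarrow> nat \<lceil>g (Suc i) / \<epsilon>\<rceil> < nat \<lceil>g i / \<epsilon>\<rceil>)"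
    using assms(3)
  proof eventually_elim
    case (elim i)
    have "nat \<lceil>g (Suc i) / \<epsilon>\<rceil> \<le> nat \<lceil>g i / \<epsilon>\<rceil>"
      using elim assms(1) by (intro nat_mono ceiling_mono divide_right_mono) auto
    then show ?case
      using elim nat_ceiling_divide_decrease[OF assms(1,2)] by blast
  qed
qed

lemma strong_cyclic_reachable_not_dead_end:
  assumes "strong_cyclic P \<pi>" and "(fond_step P \<pi>)\<^sup>*\<^sup>* (fI P) s" and "\<not> fGoal P s"
  shows "\<exists>s'. fond_step P \<pi> s s'"
proof -
  obtain g where "(fond_step P \<pi>)\<^sup>*\<^sup>* s g" "fGoal P g"
    using assms(1,2) unfolding strong_cyclic_def by blast
  then show ?thesis
    using assms(3) by (cases rule: converse_rtranclpE) auto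
qed

lemma strong_cyclic_deterministic_run_reaches_goal:
  assumes "strong_cyclic P \<pi>" and "(fond_step P \<pi>)\<^sup>*\<^sup>* (fI P) (\<alpha> N)"
    and "\<And>i s'. N \<le> i \<Longrightarrow> fond_step P \<pi> (\<alpha> i) s' \<Longrightarrow> s' = \<alpha> (Suc i)"
  shows "\<exists>i\<ge>N. fGoal P (\<alpha> i)"
proof -
  have on_run: "\<exists>i\<ge>N. s = \<alpha> i" if "(fond_step P \<pi>)\<^sup>*\<^sup>* (\<alpha> N) s" for s
    using that
  proof (induction rule: rtranclp_induct)
    case (step s s')
    then obtain i where "N \<le> i" "s = \<alpha> i"
      by blast
    with step.hyps(2) assms(3) show ?case
      using le_SucI by blast
  qed blast
  obtain g where "(fond_step P \<pi>)\<^sup>*\<^sup>* (\<alpha> N) g" "fGoal P g"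
    using assms(1,2) unfolding strong_cyclic_def by blast
  with on_run obtain i where "N \<le> i" "g = \<alpha> i"
    by blast
  with \<open>fGoal P g\<close> show ?thesis
    by blast
qed

section \<open>Abstracting Q_M to T(Q)\<close>

lemma TQ_simps [simp]:
  "fA (TQ Q) = t_actions Q"
  "fI (TQ Q) = (t_init Q, init_z Q)"
  "fGoal (TQ Q) (t, z) = t_goal Q t z"
  "fPre (TQ Q) a (t, z) = t_pre Q a t z"
  "(t', z') \<in> fSucc (TQ Q) a (t, z) \<longleftrightarrow> t' = t_deff Q a t \<and>
     (\<forall>Y. (t_num Q a Y = Some Inc \<longrightarrow> \<not> z' Y) \<and> (t_num Q a Y = None \<longrightarrow> z' Y = z Y))"
  by (simp_all add: TQ_def)

lemma QM_simps [simp]: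
  "gA (QM Q) = t_actions Q"
  "gInit (QM Q) = (\<lambda>t z. t = t_init Q \<and> z = init_z Q)"
  "gGoal (QM Q) = t_goal Q"
  "gPre (QM Q) = t_pre Q"
  "gDeff (QM Q) = t_deff Q"
  "gNum (QM Q) = t_num Q"
  by (simp_all add: QM_def)

abbreviation abs_state :: "'d \<times> ('v \<Rightarrow> real) \<Rightarrow> 'd \<times> ('v \<Rightarrow> bool)" where
  "abs_state s \<equiv> (fst s, zeros (snd s))"

lemma g_goal_QM_iff: "g_goal (QM Q) s \<longleftrightarrow> fGoal (TQ Q) (abs_state s)"
  by (simp add: g_goal_def)

lemma g_succ_nonneg:
  assumes "g_succ M a s s'" and "\<forall>X. 0 \<le> snd s X"
  shows "\<forall>X. 0 \<le> snd s' X"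
proof
  fix X
  show "0 \<le> snd s' X"
    using assms unfolding g_succ_def
    by (cases "gNum M a X") (auto split: neff.splits dest!: spec[of _ X])
qed

lemma g_succ_QM_abs_state:
  assumes "g_succ (QM Q) a s s'" and "\<forall>X. 0 \<le> snd s X"
  shows "abs_state s' \<in> fSucc (TQ Q) a (abs_state s)"
proof -
  have "fst s' = t_deff Q a (fst s)"
    using assms(1) by (simp add: g_succ_def)
  moreover have "(t_num Q a Y = Some Inc \<longrightarrow> \<not> zeros (snd s') Y) \<and>
      (t_num Q a Y = None \<longrightarrow> zeros (snd s') Y = zeros (snd s) Y)" for Y
    using assms unfolding g_succ_def zeros_def
    by (auto dest!: spec[of _ Y])
  ultimately show ?thesis
    by simp
qed

lemma eps_step_QM_abs_state:
  assumes "eps_step (QM Q) \<epsilon> \<pi> s s'" and "\<not> g_goal (QM Q) s" and "\<forall>X. 0 \<le> snd s X"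
  shows "fond_step (TQ Q) \<pi> (abs_state s) (abs_state s')" and "\<forall>X. 0 \<le> snd s' X"
  using assms g_succ_QM_abs_state[of Q _ s s'] g_succ_nonneg[of "QM Q" _ s s']
  unfolding eps_step_def fond_step_def g_goal_QM_iff by auto

lemma eps_steps_QM_reachable:
  assumes "g_init (QM Q) (f 0)"
    and "\<forall>i<n. \<not> g_goal (QM Q) (f i) \<and> eps_step (QM Q) \<epsilon> \<pi> (f i) (f (Suc i))"
    and "i \<le> n"
  shows "(\<forall>X. 0 \<le> snd (f i) X) \<and> (fond_step (TQ Q) \<pi>)\<^sup>*\<^sup>* (fI (TQ Q)) (abs_state (f i))"
  using assms(3)
proof (induction i)
  case 0
  then show ?case
    using assms(1) by (auto simp: g_init_def)
next
  case (Suc i)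
  then have IH: "\<forall>X. 0 \<le> snd (f i) X" "(fond_step (TQ Q) \<pi>)\<^sup>*\<^sup>* (fI (TQ Q)) (abs_state (f i))"
    and step: "\<not> g_goal (QM Q) (f i)" "eps_step (QM Q) \<epsilon> \<pi> (f i) (f (Suc i))"
    using assms(2) by auto
  show ?case
    using eps_step_QM_abs_state[OF step(2,1) IH(1)] IH(2) by auto
qed

lemma max_fin_traj_QM_reaches_goal:
  assumes "strong_cyclic (TQ Q) \<pi>" and "max_fin_traj (QM Q) \<epsilon> \<pi> f n"
  shows "\<exists>i\<le>n. g_goal (QM Q) (f i)"
proof (rule ccontr)
  assume no_goal: "\<not> ?thesis"
  have run: "g_init (QM Q) (f 0)"
      "\<forall>i<n. \<not> g_goal (QM Q) (f i) \<and> eps_step (QM Q) \<epsilon> \<pi> (f i) (f (Suc i))"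
    and stuck: "g_goal (QM Q) (f n) \<or> \<not> pol_applicable (QM Q) \<pi> (f n)"
    using assms(2) unfolding max_fin_traj_def by blast+
  have "(fond_step (TQ Q) \<pi>)\<^sup>*\<^sup>* (fI (TQ Q)) (abs_state (f n))"
    using eps_steps_QM_reachable[OF run] by blast
  moreover have "\<not> fGoal (TQ Q) (abs_state (f n))"
    using no_goal g_goal_QM_iff by blast
  ultimately obtain s' where "fond_step (TQ Q) \<pi> (abs_state (f n)) s'"
    using strong_cyclic_reachable_not_dead_end[OF assms(1)] by blast
  then have "pol_applicable (QM Q) \<pi> (f n)"
    unfolding fond_step_def pol_applicable_def by auto
  with stuck no_goal show False
    by blast
qed

lemma TQ_Act_succ_unique:
  assumes "\<not> has_dec Q b"
    and "s1 \<in> fSucc (TQ Q) (Act b) s" and "s2 \<in> fSucc (TQ Q) (Act b) s"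
  shows "s1 = s2"
proof -
  have "qN Q b Y = None \<or> qN Q b Y = Some Inc" for Y
    using assms(1) neff.exhaust unfolding has_dec_def by (cases "qN Q b Y") auto
  with assms(2,3) show ?thesis
    by (cases s; cases s1; cases s2) (auto simp: fun_eq_iff, metis+)
qed

section \<open>The stack encoded by T(Q)\<close>

text \<open>Positions are 1-based: index X k says that X is the k-th entry from the bottom.\<close>
definition stack_repr :: "('p,'v) tst \<Rightarrow> 'v list \<Rightarrow> bool" where
  "stack_repr t s \<longleftrightarrow> distinct s \<and> tDepth t = (\<lambda>k. k = length s) \<and> tIn t = (\<lambda>X. X \<in> set s)
     \<and> tIndex t = (\<lambda>X k. 1 \<le> k \<and> k \<le> length s \<and> s ! (k - 1) = X)"

fun stack_update :: "('v,'a) tact \<Rightarrow> 'v list \<Rightarrow> 'v list" where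
  "stack_update (Push X d) s = s @ [X]"
| "stack_update (Pop X d) s = butlast s"
| "stack_update _ s = s"

lemma stack_repr_t_init: "stack_repr (t_init Q) []"
  by (simp add: stack_repr_def t_init_def fun_eq_iff)

lemma stack_repr_Push:
  assumes "stack_repr t s" and "t_pre Q (Push X d) t z"
  shows "d = length s" and "X \<notin> set s"
  using assms by (auto simp: stack_repr_def)

lemma stack_repr_index:
  assumes "stack_repr t s" and "tIndex t X d"
  shows "1 \<le> d \<and> d \<le> length s \<and> s ! (d - 1) = X"
  using assms by (auto simp: stack_repr_def)

lemma stack_repr_Pop:
  assumes "stack_repr t s" and "t_pre Q (Pop X d) t z"
  shows "d = length s" and "s = butlast s @ [X]"
proof -
  have d: "d = length s" "1 \<le> d" "s ! (d - 1) = X"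
    using assms stack_repr_index[OF assms(1), of X d] by (auto simp: stack_repr_def)
  then show "d = length s"
    by simp
  from d have "s \<noteq> []"
    by auto
  with d have "last s = X"
    by (simp add: last_conv_nth)
  with \<open>s \<noteq> []\<close> show "s = butlast s @ [X]"
    by (metis append_butlast_last_id)
qed

lemma stack_repr_t_deff:
  assumes "stack_repr t s" and "t_pre Q a t z"
  shows "stack_repr (t_deff Q a t) (stack_update a s)"
proof (cases a)
  case (Push X d)
  with stack_repr_Push[OF assms[unfolded Push]] show ?thesis
    using assms(1) by (auto simp: stack_repr_def nth_append fun_eq_iff)
next
  case (Pop X d)
  with stack_repr_Pop[OF assms[unfolded Pop]] obtain b where d: "d = length s" "s = b @ [X]"
    by blast
  with assms(1) have "X \<notin> set b"
    by (simp add: stack_repr_def)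
  with assms(1) show ?thesis
    unfolding Pop stack_repr_def d by (auto simp: nth_append fun_eq_iff)
qed (use assms in \<open>auto simp: stack_repr_def\<close>)

section \<open>Infinite goal-free trajectories of Q_M\<close>

locale goalless_run =
  fixes Q :: "('p,'v,'a) qnp"
    and \<pi> :: "('p,'v) tst \<times> ('v \<Rightarrow> bool) \<Rightarrow> ('v,'a) tact option"
    and \<epsilon> :: real
    and f :: "nat \<Rightarrow> ('p,'v) tst \<times> ('v \<Rightarrow> real)"
  assumes eps_pos: "0 < \<epsilon>"
    and run: "max_inf_traj (QM Q) \<epsilon> \<pi> f"
    and no_goal: "\<And>i. \<not> g_goal (QM Q) (f i)"
begin

abbreviation T :: "nat \<Rightarrow> ('p,'v) tst" where
  "T i \<equiv> fst (f i)"

abbreviation v :: "nat \<Rightarrow> 'v \<Rightarrow> real" where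
  "v i \<equiv> snd (f i)"

definition act :: "nat \<Rightarrow> ('v,'a) tact" where
  "act i = the (\<pi> (abs_state (f i)))"

lemma run_eps_step: "eps_step (QM Q) \<epsilon> \<pi> (f i) (f (Suc i))"
  using run by (simp add: max_inf_traj_def)

lemma act_step:
  shows act_policy: "\<pi> (abs_state (f i)) = Some (act i)"
    and act_action: "act i \<in> t_actions Q"
    and act_pre: "t_pre Q (act i) (T i) (zeros (v i))"
    and act_succ: "g_succ (QM Q) (act i) (f i) (f (Suc i))"
    and act_eps_ok: "eps_ok \<epsilon> (v i) (v (Suc i))"
  using run_eps_step[of i] by (auto simp: eps_step_def act_def)

lemma T_Suc: "T (Suc i) = t_deff Q (act i) (T i)"
  using act_succ[of i] by (simp add: g_succ_def)

lemma v_Suc: "case t_num Q (act i) X of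
      Some Inc \<Rightarrow> v (Suc i) X > v i X
    | Some Dec \<Rightarrow> v (Suc i) X < v i X \<and> 0 \<le> v (Suc i) X
    | None \<Rightarrow> v (Suc i) X = v i X"
  using act_succ[of i] by (simp add: g_succ_def)

lemma reachable_nonneg:
  shows reachable: "(fond_step (TQ Q) \<pi>)\<^sup>*\<^sup>* (fI (TQ Q)) (abs_state (f i))"
    and nonneg: "0 \<le> v i X"
  using eps_steps_QM_reachable[of Q f i \<epsilon> \<pi> i] run no_goal by (auto simp: max_inf_traj_def)

primrec stack :: "nat \<Rightarrow> 'v list" where
  "stack 0 = []"
| "stack (Suc i) = stack_update (act i) (stack i)"

abbreviation depth :: "nat \<Rightarrow> nat" where
  "depth i \<equiv> length (stack i)"

lemma stack_repr_run: "stack_repr (T i) (stack i)"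
proof (induction i)
  case 0
  then show ?case
    using run stack_repr_t_init by (simp add: max_inf_traj_def g_init_def)
next
  case (Suc i)
  then show ?case
    using stack_repr_t_deff[OF Suc act_pre] by (simp add: T_Suc)
qed

lemma Push_at_depth:
  assumes "act i = Push X d"
  shows "d = depth i" and "stack (Suc i) = stack i @ [X]"
  using stack_repr_Push(1)[OF stack_repr_run] act_pre[of i] assms by simp_all

lemma Pop_at_depth:
  assumes "act i = Pop X d"
  shows "stack i = stack (Suc i) @ [X]"
  using stack_repr_Pop(2)[OF stack_repr_run] act_pre[of i] assms by simp

lemma ActD_index:
  assumes "act i = ActD b X d"
  shows "1 \<le> d" and "d \<le> depth i" and "stack i ! (d - 1) = X"
  using stack_repr_index[OF stack_repr_run, of i X d] act_pre[of i] assms by simp_all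

lemma depth_le: "depth i \<le> nV Q"
proof (induction i)
  case (Suc i)
  show ?case
  proof (cases "act i")
    case (Push X d)
    with act_action[of i] have "d < nV Q"
      by (auto simp: t_actions_def)
    with Push_at_depth[OF Push] show ?thesis
      by simp
  qed (use Suc in auto)
qed simp

lemma depth_Suc_le:
  assumes "\<And>X. act i \<noteq> Push X (depth i)"
  shows "depth (Suc i) \<le> depth i"
  using assms Push_at_depth by (cases "act i") auto

lemma v_Suc_le_if_in_stack:
  assumes "tIn (T i) X"
  shows "v (Suc i) X \<le> v i X"
proof -
  have "t_num Q (act i) X \<noteq> Some Inc"
    using act_pre[of i] assms by (cases "act i") auto
  then show ?thesis
    using v_Suc[of i X] by (auto split: option.splits neff.splits)
qed

lemma v_Suc_ActD:
  assumes "act i = ActD b X d"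
  shows "v (Suc i) X < v i X \<and> (\<epsilon> \<le> v i X - v (Suc i) X \<or> v (Suc i) X = 0)"
proof -
  have "t_num Q (act i) X = Some Dec"
    using act_action[of i] assms by (auto simp: t_actions_def)
  then have "v (Suc i) X < v i X"
    using v_Suc[of i X] by simp
  with act_eps_ok[of i] show ?thesis
    unfolding eps_ok_def by (auto dest!: spec[of _ X])
qed

lemma eventually_no_ActD_if_in_stack:
  assumes "\<forall>\<^sub>F i in sequentially. tIn (T i) X"
  shows "\<forall>\<^sub>F i in sequentially. \<forall>b d. act i \<noteq> ActD b X d"
proof -
  have "\<forall>\<^sub>F i in sequentially. \<not> (\<exists>b d. act i = ActD b X d)"
  proof (rule eventually_not_of_eps_decrease[OF eps_pos nonneg])
    show "\<forall>\<^sub>F i in sequentially. v (Suc i) X \<le> v i X \<and> ((\<exists>b d. act i = ActD b X d) \<longrightarrow>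
        v (Suc i) X < v i X \<and> (\<epsilon> \<le> v i X - v (Suc i) X \<or> v (Suc i) X = 0))"
      using assms by eventually_elim (use v_Suc_le_if_in_stack v_Suc_ActD in blast)
  qed
  then show ?thesis
    by simp
qed

lemma tC_Suc_ge:
  assumes "k \<le> depth i" and "\<And>b X d. act i = ActD b X d \<Longrightarrow> k < d"
  shows "tC (T i) k \<le> tC (T (Suc i)) k"
proof (cases "act i")
  case (Push X d)
  then show ?thesis
    using Push_at_depth(1)[OF Push] assms(1) by (auto simp: T_Suc)
next
  case (ActD b X d)
  then show ?thesis
    using assms(2)[OF ActD] by (auto simp: T_Suc)
qed (auto simp: T_Suc)

lemma tC_Push:
  assumes "act i = Push X k"
  shows "tC (T i) k < MaxC Q \<and> tC (T i) k < tC (T (Suc i)) k"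
  using act_pre[of i] assms by (auto simp: T_Suc)

lemma eventually_no_Move: "\<forall>\<^sub>F i in sequentially. act i \<noteq> Move"
proof -
  have "\<forall>\<^sub>F i in sequentially. \<not> act i = Move"
  proof (rule eventually_not_of_nat_potential[where h = "\<lambda>i. MaxC Q - tCT (T i)"],
      rule eventually_sequentiallyI)
    fix i
    show "MaxC Q - tCT (T (Suc i)) \<le> MaxC Q - tCT (T i) \<and>
        (act i = Move \<longrightarrow> MaxC Q - tCT (T (Suc i)) < MaxC Q - tCT (T i))"
      using act_pre[of i] by (cases "act i") (auto simp: T_Suc)
  qed
  then show ?thesis
    by simp
qed

definition base_depth :: nat where
  "base_depth = (LEAST d. \<exists>\<^sub>F i in sequentially. depth i = d)"

lemma frequently_depth_base_depth: "\<exists>\<^sub>F i in sequentially. depth i = base_depth"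
proof -
  have "\<exists>d. \<exists>\<^sub>F i in sequentially. depth i = d"
  proof (rule ccontr)
    assume "\<not> ?thesis"
    then have "\<forall>d\<in>{..nV Q}. \<forall>\<^sub>F i in sequentially. depth i \<noteq> d"
      by (simp add: not_frequently)
    then have "\<forall>\<^sub>F i in sequentially. \<forall>d\<in>{..nV Q}. depth i \<noteq> d"
      by (rule eventually_ball_finite[OF finite_atMost])
    then have "\<forall>\<^sub>F i in sequentially. False"
      by eventually_elim (use depth_le in auto)
    then show False
      by simp
  qed
  then show ?thesis
    unfolding base_depth_def by (rule LeastI_ex)
qed

lemma eventually_base_depth_le_depth: "\<forall>\<^sub>F i in sequentially. base_depth \<le> depth i"
proof -
  have "\<forall>\<^sub>F i in sequentially. depth i \<noteq> d" if "d < base_depth" for d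
    using not_less_Least[OF that[unfolded base_depth_def]] by (simp add: not_frequently)
  then have "\<forall>\<^sub>F i in sequentially. \<forall>d\<in>{..<base_depth}. depth i \<noteq> d"
    by (intro eventually_ball_finite) auto
  then show ?thesis
    by eventually_elim auto
qed

lemma eventually_bottom_constant:
  obtains bottom where "\<forall>\<^sub>F i in sequentially. take base_depth (stack i) = bottom"
proof -
  obtain M where M: "\<And>i. M \<le> i \<Longrightarrow> base_depth \<le> depth i"
    using eventually_base_depth_le_depth by (auto simp: eventually_sequentially)
  have "take base_depth (stack (Suc i)) = take base_depth (stack i)" if "M \<le> i" for i
  proof (cases "act i")
    case (Push X d)
    then show ?thesis
      using Push_at_depth(2)[OF Push] M[OF that] by simp
  next
    case (Pop X d)
    then show ?thesis
      using Pop_at_depth[OF Pop] M[of "Suc i"] that by (simp del: stack.simps(2))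
  qed simp_all
  then have "\<forall>\<^sub>F i in sequentially. take base_depth (stack i) = take base_depth (stack M)"
    by (intro eventually_sequentially_inductive[of _ M]) simp_all
  then show ?thesis
    using that by blast
qed

lemma eventually_no_ActD_at_base:
  "\<forall>\<^sub>F i in sequentially. \<forall>b X d. d \<le> base_depth \<longrightarrow> act i \<noteq> ActD b X d"
proof -
  obtain bottom where bottom: "\<forall>\<^sub>F i in sequentially. take base_depth (stack i) = bottom"
    using eventually_bottom_constant .
  have "\<forall>\<^sub>F i in sequentially. tIn (T i) X" if "X \<in> set bottom" for X
    using bottom
  proof eventually_elim
    case (elim i)
    with that have "X \<in> set (stack i)"
      by (metis in_set_takeD)
    then show ?case
      using stack_repr_run[of i] by (simp add: stack_repr_def)
  qed
  then have "\<forall>X\<in>set bottom. \<forall>\<^sub>F i in sequentially. \<forall>b d. act i \<noteq> ActD b X d"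
    using eventually_no_ActD_if_in_stack by blast
  then have "\<forall>\<^sub>F i in sequentially. \<forall>X\<in>set bottom. \<forall>b d. act i \<noteq> ActD b X d"
    by (rule eventually_ball_finite[OF finite_set])
  with bottom show ?thesis
  proof eventually_elim
    case (elim i)
    show ?case
    proof (intro allI impI notI)
      fix b X d
      assume "d \<le> base_depth" and ActD: "act i = ActD b X d"
      with ActD_index[OF ActD] have "take base_depth (stack i) ! (d - 1) = X"
        and "d - 1 < length (take base_depth (stack i))"
        by auto
      with elim(1) have "X \<in> set bottom"
        by (metis nth_mem)
      with elim(2) ActD show False
        by blast
    qed
  qed
qed

lemma eventually_no_Push_at_base: "\<forall>\<^sub>F i in sequentially. \<forall>X. act i \<noteq> Push X base_depth"
proof -
  have "\<forall>\<^sub>F i in sequentially. \<not> (\<exists>X. act i = Push X base_depth)"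
  proof (rule eventually_not_of_nat_potential[where h = "\<lambda>i. MaxC Q - tC (T i) base_depth"])
    show "\<forall>\<^sub>F i in sequentially.
        MaxC Q - tC (T (Suc i)) base_depth \<le> MaxC Q - tC (T i) base_depth \<and>
        ((\<exists>X. act i = Push X base_depth) \<longrightarrow>
          MaxC Q - tC (T (Suc i)) base_depth < MaxC Q - tC (T i) base_depth)"
      using eventually_base_depth_le_depth eventually_no_ActD_at_base
    proof eventually_elim
      case (elim i)
      then have "tC (T i) base_depth \<le> tC (T (Suc i)) base_depth"
        by (intro tC_Suc_ge) (auto simp: not_le[symmetric])
      then show ?case
        using tC_Push by (auto simp: diff_less_mono2)
    qed
  qed
  then show ?thesis
    by simp
qed

lemma eventually_depth_eq_base: "\<forall>\<^sub>F i in sequentially. depth i = base_depth"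
proof (rule eventually_of_frequently_invariant[OF _ frequently_depth_base_depth])
  have "\<forall>\<^sub>F i in sequentially. base_depth \<le> depth (Suc i)"
    using eventually_sequentially_Suc[of "\<lambda>i. base_depth \<le> depth i"]
      eventually_base_depth_le_depth by (simp only:)
  with eventually_no_Push_at_base
  show "\<forall>\<^sub>F i in sequentially. depth i = base_depth \<longrightarrow> depth (Suc i) = base_depth"
  proof eventually_elim
    case (elim i)
    show ?case
    proof
      assume "depth i = base_depth"
      with elim(1) have "depth (Suc i) \<le> depth i"
        by (intro depth_Suc_le) simp
      with elim(2) \<open>depth i = base_depth\<close> show "depth (Suc i) = base_depth"
        by linarith
    qed
  qed
qed

lemma eventually_Act: "\<forall>\<^sub>F i in sequentially. \<exists>b. act i = Act b"
proof -
  have "\<forall>\<^sub>F i in sequentially. depth (Suc i) = base_depth"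
    using eventually_sequentially_Suc[of "\<lambda>i. depth i = base_depth"] eventually_depth_eq_base
    by (simp only:)
  with eventually_depth_eq_base eventually_no_Push_at_base eventually_no_ActD_at_base
    eventually_no_Move
  show ?thesis
  proof eventually_elim
    case (elim i)
    show ?case
    proof (cases "act i")
      case (Push X d)
      then have "act i = Push X base_depth"
        using Push_at_depth(1)[OF Push] elim(1) by simp
      with elim(2) show ?thesis
        by blast
    next
      case (Pop X d)
      then have "depth i = Suc (depth (Suc i))"
        using Pop_at_depth[OF Pop] by (metis length_append_singleton)
      with elim(1,5) show ?thesis
        by linarith
    next
      case (ActD b X d)
      then have "d \<le> base_depth"
        using ActD_index(2)[OF ActD] elim(1) by linarith
      with elim(3) ActD show ?thesis
        by blast
    qed (use elim(4) in blast)+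
  qed
qed

lemma Act_step_deterministic:
  assumes "act i = Act b" and "fond_step (TQ Q) \<pi> (abs_state (f i)) s'"
  shows "s' = abs_state (f (Suc i))"
proof (rule TQ_Act_succ_unique)
  show "\<not> has_dec Q b"
    using act_action[of i] assms(1) by (auto simp: t_actions_def)
  show "s' \<in> fSucc (TQ Q) (Act b) (abs_state (f i))"
    using assms act_policy[of i] by (simp add: fond_step_def)
  show "abs_state (f (Suc i)) \<in> fSucc (TQ Q) (Act b) (abs_state (f i))"
    using g_succ_QM_abs_state[OF act_succ] nonneg assms(1) by simp
qed

lemma not_strong_cyclic: "\<not> strong_cyclic (TQ Q) \<pi>"
proof
  assume sc: "strong_cyclic (TQ Q) \<pi>"
  obtain N where N: "\<And>i. N \<le> i \<Longrightarrow> \<exists>b. act i = Act b"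
    using eventually_Act by (auto simp: eventually_sequentially)
  have "\<exists>i\<ge>N. fGoal (TQ Q) ((\<lambda>i. abs_state (f i)) i)"
    by (rule strong_cyclic_deterministic_run_reaches_goal[where \<alpha> = "\<lambda>i. abs_state (f i)",
          OF sc reachable]) (use N Act_step_deterministic in blast)
  then show False
    using no_goal by (simp add: g_goal_QM_iff)
qed

end

theorem theorem12:
  fixes Q :: "('p,'v,'a) qnp"
    and \<pi> :: "('p,'v) tst \<times> ('v \<Rightarrow> bool) \<Rightarrow> ('v,'a) tact option"
  assumes "wf_qnp Q"
    and "strong_cyclic (TQ Q) \<pi>"
  shows "qnp_solves (QM Q) \<pi>"
  unfolding qnp_solves_def
proof (intro allI impI conjI)
  fix \<epsilon> :: real and f n
  assume "max_fin_traj (QM Q) \<epsilon> \<pi> f n"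
  then show "\<exists>i\<le>n. g_goal (QM Q) (f i)"
    using max_fin_traj_QM_reaches_goal assms(2) by blast
next
  fix \<epsilon> :: real and f
  assume "0 < \<epsilon>" and "max_inf_traj (QM Q) \<epsilon> \<pi> f"
  show "\<exists>i. g_goal (QM Q) (f i)"
  proof (rule ccontr)
    assume "\<nexists>i. g_goal (QM Q) (f i)"
    with \<open>0 < \<epsilon>\<close> \<open>max_inf_traj (QM Q) \<epsilon> \<pi> f\<close> interpret goalless_run Q \<pi> \<epsilon> f
      by unfold_locales blast+
    show False
      using not_strong_cyclic assms(2) by blast
  qed
qed

end
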